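(* Let $\alpha\neq0$, $s,t\in\mathbb{C}$, $w=\tfrac12(s+t)$ with $w\notin\mathbb{Z}$, $n$ a positive integer, $c\in\mathbb{Z}$, $k\in\{-n,-n+2,\dots,n\}$, $u\in\mathbb{C}$, and $n_\pm(k)=\tfrac12(n\pm k)$. Then the following polynomial identities in $z$ hold: $$-\alpha^{-1}\Big\{[\alpha(-u+c+1+s)-z]\Delta_--\alpha u\Delta_+\Big\}\psi^{(n)}(z|0)^{c+k+1}_{c+1}=\frac{n_-(k)(c+1-n_-(k)+w-u)}{c+k+1+w}\,\psi^{(n)}(z|0)^{c+k+2}_{c}+\frac{(u+n_+(k))(c+1+n_+(k)+w)}{c+k+1+w}\,\psi^{(n)}(z|0)^{c+k}_{c},$$ $$-\alpha^{-1}\Big\{[\alpha(-u-c+1-t)-z]\Delta_--\alpha u\Delta_+\Big\}\psi^{(n)}(z|0)^{c+k-1}_{c-1}=\frac{n_+(k)(c-1+n_+(k)+w+u)}{c+k-1+w}\,\psi^{(n)}(z|0)^{c+k-2}_{c}+\frac{(u+n_-(k))(c-1-n_-(k)+w)}{c+k-1+w}\,\psi^{(n)}(z|0)^{c+k}_{c}.$$ Thus these coefficients are the weights $W^{(n,1)}\left(\begin{smallmatrix} c+k+1& c+1\\ c+k+1\pm1& c\end{smallmatrix}\middle|u\right)$ and $W^{(n,1)}\left(\begin{smallmatrix} c+k-1& c-1\\ c+k-1\mp1& c\end{smallmatrix}\middle|u\right)$ respectively.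
   Context: $[\Delta_\pm f](z)=\tfrac12(f(z+\alpha)\pm f(z-\alpha))$; $z$ acts by multiplication. For a positive integer $n$, integers $a,b$ and $u\in\mathbb{C}$, with $n_+=\tfrac12(n+b-a)$, $n_-=\tfrac12(n-b+a)$: if $n_\pm$ are nonnegative integers, $\psi^{(n)}(z|u)^a_b=(-1)^n\prod_{p=1}^{n_+}[z-\alpha(u+n-a-2p+1-t)]\prod_{q=1}^{n_-}[z-\alpha(u+n+a-2q+1+s)]$; otherwise $\psi^{(n)}(z|u)^a_b=0$. *)

theory Defs
  imports Complex_Main
begin

definition Dplus :: "complex \<Rightarrow> (complex \<Rightarrow> complex) \<Rightarrow> complex \<Rightarrow> complex" where
  "Dplus \<alpha> f z = (f (z + \<alpha>) + f (z - \<alpha>)) / 2"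

definition Dminus :: "complex \<Rightarrow> (complex \<Rightarrow> complex) \<Rightarrow> complex \<Rightarrow> complex" where
  "Dminus \<alpha> f z = (f (z + \<alpha>) - f (z - \<alpha>)) / 2"

text \<open>psi alpha s t n u a b z = psi^(n)(z|u)^a_b; n_+ = (n+b-a)/2, n_- = (n-b+a)/2 must be
  nonnegative integers, i.e. n+b-a even and |b-a| <= n.\<close>
definition psi :: "complex \<Rightarrow> complex \<Rightarrow> complex \<Rightarrow> nat \<Rightarrow> complex \<Rightarrow> int \<Rightarrow> int \<Rightarrow> complex \<Rightarrow> complex" where
  "psi \<alpha> s t n u a b z =
    (if even (int n + b - a) \<and> int n + b - a \<ge> 0 \<and> int n - b + a \<ge> 0 then
       (-1) ^ n *
       (\<Prod>p\<in>{1..nat ((int n + b - a) div 2)}.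
          z - \<alpha> * (u + of_nat n - of_int a - 2 * of_nat p + 1 - t)) *
       (\<Prod>q\<in>{1..nat ((int n - b + a) div 2)}.
          z - \<alpha> * (u + of_nat n + of_int a - 2 * of_nat q + 1 + s))
     else 0)"

end

theory Submission
  imports Defs
begin

text \<open>With \<open>u = 0\<close>, \<open>\<psi>\<^sup>(\<^sup>n\<^sup>)(z|0)\<^sup>a\<^sub>b\<close> is, up to sign, a product of two
  arithmetic progressions of linear factors \<open>\<Prod>p=1..m. z - \<alpha>(R - 2p)\<close>. The shifts
  \<open>z \<mapsto> z \<plusminus> \<alpha>\<close> only move the offsets \<open>R\<close> by \<open>\<mp>1\<close>, and products with offsets \<open>R \<plusminus> 1\<close>
  share all but one factor, so after cancelling a common product the first identity becomes a
  quadratic polynomial identity in \<open>z\<close>. The second identity is the first one seen through the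
  symmetry \<open>\<psi>\<^sub>s\<^sub>,\<^sub>t(a, b) = \<psi>\<^sub>-\<^sub>t\<^sub>,\<^sub>-\<^sub>s(-a, -b)\<close>, which exchanges the two progressions.\<close>

definition psi_factor :: "complex \<Rightarrow> complex \<Rightarrow> nat \<Rightarrow> complex \<Rightarrow> complex" where
  "psi_factor \<alpha> R m z = (\<Prod>p\<in>{1..m}. z - \<alpha> * (R - 2 * of_nat p))"

lemma psi_factor_0 [simp]: "psi_factor \<alpha> R 0 z = 1"
  by (simp add: psi_factor_def)

lemma psi_factor_Suc:
  "psi_factor \<alpha> R (Suc m) z = psi_factor \<alpha> R m z * (z - \<alpha> * (R - 2 * of_nat m - 2))"
  unfolding psi_factor_def by (simp add: prod.cl_ivl_Suc algebra_simps)

lemma psi_factor_Suc_head: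
  "psi_factor \<alpha> (R + 1) (Suc m) z = (z - \<alpha> * (R - 1)) * psi_factor \<alpha> (R - 1) m z"
proof -
  have "psi_factor \<alpha> (R + 1) (Suc m) z
      = (z - \<alpha> * (R - 1)) * (\<Prod>p\<in>{Suc 1..Suc m}. z - \<alpha> * (R + 1 - 2 * of_nat p))"
    unfolding psi_factor_def by (subst prod.atLeast_Suc_atMost) (auto simp: algebra_simps)
  also have "(\<Prod>p\<in>{Suc 1..Suc m}. z - \<alpha> * (R + 1 - 2 * of_nat p)) = psi_factor \<alpha> (R - 1) m z"
    unfolding psi_factor_def prod.shift_bounds_cl_Suc_ivl by (intro prod.cong) (auto simp: algebra_simps)
  finally show ?thesis .
qed

lemma psi_factor_plus: "psi_factor \<alpha> R m (z + \<alpha>) = psi_factor \<alpha> (R - 1) m z"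
  unfolding psi_factor_def by (intro prod.cong) (auto simp: algebra_simps)

lemma psi_factor_minus: "psi_factor \<alpha> R m (z - \<alpha>) = psi_factor \<alpha> (R + 1) m z"
  unfolding psi_factor_def by (intro prod.cong) (auto simp: algebra_simps)

lemma psi_factor_contiguity:
  fixes \<alpha> R S h u z :: complex and m l :: nat
  assumes "\<alpha> \<noteq> 0" "h \<noteq> 0" "S = R + 2 * h"
  defines "P \<equiv> \<lambda>z. psi_factor \<alpha> R m z * psi_factor \<alpha> S l z"
  shows "- (1 / \<alpha>) * ((\<alpha> * (S - 2 * of_nat l - 1 - u) - z) * Dminus \<alpha> P z
                      - \<alpha> * u * Dplus \<alpha> P z)
    = of_nat m * (h - of_nat l - u) / h
        * (psi_factor \<alpha> (R - 1) (m - 1) z * psi_factor \<alpha> (S + 1) (Suc l) z)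
      + (u + of_nat l) * (h + of_nat m) / h
        * (psi_factor \<alpha> (R + 1) m z * psi_factor \<alpha> (S - 1) l z)"
proof -
  have D: "Dminus \<alpha> P z = (psi_factor \<alpha> (R - 1) m z * psi_factor \<alpha> (S - 1) l z
                           - psi_factor \<alpha> (R + 1) m z * psi_factor \<alpha> (S + 1) l z) / 2"
          "Dplus \<alpha> P z = (psi_factor \<alpha> (R - 1) m z * psi_factor \<alpha> (S - 1) l z
                           + psi_factor \<alpha> (R + 1) m z * psi_factor \<alpha> (S + 1) l z) / 2"
    by (simp_all add: P_def Dminus_def Dplus_def psi_factor_plus psi_factor_minus)
  note S_head = psi_factor_Suc_head[of \<alpha> S l]
  note steps = psi_factor_Suc[of \<alpha> "R - 1"] psi_factor_Suc_head[of \<alpha> R]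
    psi_factor_Suc[of \<alpha> "S - 1"] psi_factor_Suc_head[of \<alpha> S]
  show ?thesis
    unfolding D S_head using assms(1,2)
    by (cases m; cases l; simp only: steps; simp add: field_simps assms(3); simp add: algebra_simps)
qed

lemma Dminus_scale: "Dminus \<alpha> (\<lambda>z. \<kappa> * f z) z = \<kappa> * Dminus \<alpha> f z"
  by (simp add: Dminus_def algebra_simps)

lemma Dplus_scale: "Dplus \<alpha> (\<lambda>z. \<kappa> * f z) z = \<kappa> * Dplus \<alpha> f z"
  by (simp add: Dplus_def algebra_simps)

lemma psi_eq_psi_factor:
  assumes "int n + b - a = 2 * int i" and "int n - b + a = 2 * int j"
    and "R = u + of_nat n - of_int a + 1 - t" and "S = u + of_nat n + of_int a + 1 + s"
  shows "psi \<alpha> s t n u a b z = (-1) ^ n * (psi_factor \<alpha> R i z * psi_factor \<alpha> S j z)"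
proof -
  have "nat ((int n + b - a) div 2) = i" "nat ((int n - b + a) div 2) = j"
    using assms(1,2) by auto
  moreover have "even (int n + b - a) \<and> int n + b - a \<ge> 0 \<and> int n - b + a \<ge> 0"
    using assms(1,2) by auto
  ultimately show ?thesis
    unfolding psi_def psi_factor_def assms(3,4)
    by (simp add: mult.assoc) (intro arg_cong2[where f = "(*)"] prod.cong; simp add: algebra_simps)
qed

lemma psi_contiguity_raise:
  fixes \<alpha> s t u z :: complex and n m l :: nat and c k :: int
  assumes "\<alpha> \<noteq> 0" and den: "of_int c + of_int k + 1 + (s + t) / 2 \<noteq> (0::complex)"
    and m: "int n - k = 2 * int m" and l: "int n + k = 2 * int l"
  shows "- (1 / \<alpha>) *
            ((\<alpha> * (- u + of_int c + 1 + s) - z) * Dminus \<alpha> (psi \<alpha> s t n 0 (c + k + 1) (c + 1)) z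
             - \<alpha> * u * Dplus \<alpha> (psi \<alpha> s t n 0 (c + k + 1) (c + 1)) z)
         = ((of_int n - of_int k) / 2) * (of_int c + 1 - (of_int n - of_int k) / 2 + (s + t) / 2 - u)
             / (of_int c + of_int k + 1 + (s + t) / 2) * psi \<alpha> s t n 0 (c + k + 2) c z
           + (u + (of_int n + of_int k) / 2) * (of_int c + 1 + (of_int n + of_int k) / 2 + (s + t) / 2)
             / (of_int c + of_int k + 1 + (s + t) / 2) * psi \<alpha> s t n 0 (c + k) c z"
    (is "?lhs = ?rhs")
proof -
  define R where "R = of_nat n - of_int (c + k + 1) + 1 - t"
  define S where "S = of_nat n + of_int (c + k + 1) + 1 + s"
  define h where "h = of_int c + of_int k + 1 + (s + t) / 2"
  define P where "P = (\<lambda>z. psi_factor \<alpha> R m z * psi_factor \<alpha> S l z)"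
  have "int n = int m + int l" "k = int l - int m"
    using m l by linarith+
  then have nk: "(of_nat n :: complex) = of_nat m + of_nat l" "(of_int k :: complex) = of_nat l - of_nat m"
    by (metis of_int_add of_int_of_nat_eq, simp)
  have psi_P: "psi \<alpha> s t n 0 (c + k + 1) (c + 1) = (\<lambda>z. (-1) ^ n * P z)"
    unfolding P_def using m l by (intro ext psi_eq_psi_factor) (auto simp: R_def S_def)
  \<comment> \<open>For \<open>m = 0\<close> the left factor is \<open>\<psi>\<close> outside its support and the right one uses the
    truncated \<open>m - 1\<close>; the weight \<open>m\<close> kills both.\<close>
  have psi_lowered: "of_nat m * psi \<alpha> s t n 0 (c + k + 2) c z
      = of_nat m * ((-1) ^ n * (psi_factor \<alpha> (R - 1) (m - 1) z * psi_factor \<alpha> (S + 1) (Suc l) z))"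
    using m l by (cases m) (auto simp: R_def S_def intro!: psi_eq_psi_factor)
  have psi_shifted:
    "psi \<alpha> s t n 0 (c + k) c z = (-1) ^ n * (psi_factor \<alpha> (R + 1) m z * psi_factor \<alpha> (S - 1) l z)"
    using m l by (intro psi_eq_psi_factor) (auto simp: R_def S_def)
  have "?lhs = (-1) ^ n * (- (1 / \<alpha>) *
      ((\<alpha> * (S - 2 * of_nat l - 1 - u) - z) * Dminus \<alpha> P z - \<alpha> * u * Dplus \<alpha> P z))"
    unfolding psi_P Dminus_scale Dplus_scale by (simp add: S_def nk algebra_simps)
  also have "\<dots> = (-1) ^ n *
      (of_nat m * (h - of_nat l - u) / h * (psi_factor \<alpha> (R - 1) (m - 1) z * psi_factor \<alpha> (S + 1) (Suc l) z)
       + (u + of_nat l) * (h + of_nat m) / h * (psi_factor \<alpha> (R + 1) m z * psi_factor \<alpha> (S - 1) l z))"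
    unfolding P_def
    by (rule arg_cong[where f = "(*) _"], rule psi_factor_contiguity[OF assms(1) den[folded h_def]])
       (simp add: R_def S_def h_def field_simps)
  also have "\<dots> = (h - of_nat l - u) / h * (of_nat m * psi \<alpha> s t n 0 (c + k + 2) c z)
      + (u + of_nat l) * (h + of_nat m) / h * psi \<alpha> s t n 0 (c + k) c z"
    unfolding psi_lowered psi_shifted by (simp add: algebra_simps)
  also have "\<dots> = ?rhs"
    by (simp add: h_def nk field_simps)
  finally show ?thesis .
qed

lemma psi_reflect: "psi \<alpha> s t n u a b = psi \<alpha> (- t) (- s) n u (- a) (- b)"
  unfolding psi_def by (intro ext) (auto simp: algebra_simps)

lemma psi_contiguity_lower:
  fixes \<alpha> s t u z :: complex and n m l :: nat and c k :: int
  assumes "\<alpha> \<noteq> 0" and den: "of_int c + of_int k - 1 + (s + t) / 2 \<noteq> (0::complex)"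
    and m: "int n - k = 2 * int m" and l: "int n + k = 2 * int l"
  shows "- (1 / \<alpha>) *
            ((\<alpha> * (- u - of_int c + 1 - t) - z) * Dminus \<alpha> (psi \<alpha> s t n 0 (c + k - 1) (c - 1)) z
             - \<alpha> * u * Dplus \<alpha> (psi \<alpha> s t n 0 (c + k - 1) (c - 1)) z)
         = ((of_int n + of_int k) / 2) * (of_int c - 1 + (of_int n + of_int k) / 2 + (s + t) / 2 + u)
             / (of_int c + of_int k - 1 + (s + t) / 2) * psi \<alpha> s t n 0 (c + k - 2) c z
           + (u + (of_int n - of_int k) / 2) * (of_int c - 1 - (of_int n - of_int k) / 2 + (s + t) / 2)
             / (of_int c + of_int k - 1 + (s + t) / 2) * psi \<alpha> s t n 0 (c + k) c z"
proof -
  have den_reflected: "of_int (- c) + of_int (- k) + 1 + (- t + - s) / 2 \<noteq> (0::complex)"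
    using den by (simp add: field_simps)
  have "int n - (- k) = 2 * int l" "int n + (- k) = 2 * int m"
    using m l by simp_all
  note raise = psi_contiguity_raise[OF assms(1) den_reflected this, of u z]
  have "of_int (- c) + of_int (- k) + 1 + (- t + - s) / 2
          = - (of_int c + of_int k - 1 + (s + t) / 2 :: complex)"
    "of_int (- c) + 1 - (of_int n - of_int (- k)) / 2 + (- t + - s) / 2 - u
          = - (of_int c - 1 + (of_int n + of_int k) / 2 + (s + t) / 2 + u :: complex)"
    "of_int (- c) + 1 + (of_int n + of_int (- k)) / 2 + (- t + - s) / 2
          = - (of_int c - 1 - (of_int n - of_int k) / 2 + (s + t) / 2 :: complex)"
    by (simp_all add: field_simps)
  then have weights:
    "(of_int n - of_int (- k)) / 2
        * (of_int (- c) + 1 - (of_int n - of_int (- k)) / 2 + (- t + - s) / 2 - u)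
        / (of_int (- c) + of_int (- k) + 1 + (- t + - s) / 2)
      = (of_int n + of_int k) / 2 * (of_int c - 1 + (of_int n + of_int k) / 2 + (s + t) / 2 + u)
        / (of_int c + of_int k - 1 + (s + t) / 2)"
    "(u + (of_int n + of_int (- k)) / 2)
        * (of_int (- c) + 1 + (of_int n + of_int (- k)) / 2 + (- t + - s) / 2)
        / (of_int (- c) + of_int (- k) + 1 + (- t + - s) / 2)
      = (u + (of_int n - of_int k) / 2) * (of_int c - 1 - (of_int n - of_int k) / 2 + (s + t) / 2)
        / (of_int c + of_int k - 1 + (s + t) / 2)"
    by (simp_all only: mult_minus_right minus_divide_divide of_int_minus diff_minus_eq_add
        add_uminus_conv_diff add.commute[of u])
  show ?thesis
    by (rule trans[OF _ trans[OF raise[unfolded weights]]];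
        subst (1 2) psi_reflect[of \<alpha> s t]; simp add: algebra_simps)
qed

lemma of_int_add_neq_0_if_not_Ints: "x \<notin> \<int> \<Longrightarrow> of_int i + x \<noteq> 0"
  by (metis Ints_minus Ints_of_int add_eq_0_iff add.commute)

theorem mainTheorem10:
  fixes \<alpha> s t u :: complex and n :: nat and c k :: int
  assumes "\<alpha> \<noteq> 0"
    and "(s + t) / 2 \<notin> \<int>"
    and "n > 0"
    and "\<bar>k\<bar> \<le> int n" and "even (int n + k)"
  shows "(\<forall>z. - (1 / \<alpha>) *
            ((\<alpha> * (- u + of_int c + 1 + s) - z) * Dminus \<alpha> (psi \<alpha> s t n 0 (c + k + 1) (c + 1)) z
             - \<alpha> * u * Dplus \<alpha> (psi \<alpha> s t n 0 (c + k + 1) (c + 1)) z)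
         = ((of_int n - of_int k) / 2) * (of_int c + 1 - (of_int n - of_int k) / 2 + (s + t) / 2 - u)
             / (of_int c + of_int k + 1 + (s + t) / 2) * psi \<alpha> s t n 0 (c + k + 2) c z
           + (u + (of_int n + of_int k) / 2) * (of_int c + 1 + (of_int n + of_int k) / 2 + (s + t) / 2)
             / (of_int c + of_int k + 1 + (s + t) / 2) * psi \<alpha> s t n 0 (c + k) c z)
    \<and> (\<forall>z. - (1 / \<alpha>) *
            ((\<alpha> * (- u - of_int c + 1 - t) - z) * Dminus \<alpha> (psi \<alpha> s t n 0 (c + k - 1) (c - 1)) z
             - \<alpha> * u * Dplus \<alpha> (psi \<alpha> s t n 0 (c + k - 1) (c - 1)) z)
         = ((of_int n + of_int k) / 2) * (of_int c - 1 + (of_int n + of_int k) / 2 + (s + t) / 2 + u)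
             / (of_int c + of_int k - 1 + (s + t) / 2) * psi \<alpha> s t n 0 (c + k - 2) c z
           + (u + (of_int n - of_int k) / 2) * (of_int c - 1 - (of_int n - of_int k) / 2 + (s + t) / 2)
             / (of_int c + of_int k - 1 + (s + t) / 2) * psi \<alpha> s t n 0 (c + k) c z)"
proof -
  obtain j where j: "int n + k = 2 * j"
    using assms(5) by (rule evenE)
  have l: "int n + k = 2 * int (nat j)" and m: "int n - k = 2 * int (nat (int n - j))"
    using j assms(4) by auto
  have "of_int c + of_int k + 1 + (s + t) / 2 \<noteq> (0::complex)"
    "of_int c + of_int k - 1 + (s + t) / 2 \<noteq> (0::complex)"
    using of_int_add_neq_0_if_not_Ints[OF assms(2), of "c + k + 1"]
      of_int_add_neq_0_if_not_Ints[OF assms(2), of "c + k - 1"]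
    by simp_all
  with psi_contiguity_raise[OF assms(1) _ m l] psi_contiguity_lower[OF assms(1) _ m l]
  show ?thesis by blast
qed

end
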